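(* Assume the Setting and let $(\xi_n,x_n)$ be generated by Algorithm 2 with $0<\mu_0<4\sigma(1-\eta)$ and $0<\beta<1$. Then there exists a solution $x^*$ of $F(x)=y$ with $x^*\in B_{2\rho}(x_0)\cap\mathrm{dom}(\mathcal R)$ such that $\lim_{n\to\infty}D_{\mathcal R}^{\xi_n}(x^*,x_n)=0$ and $\lim_{n\to\infty}\|x_n-x^*\|=0$. If in addition $\mathrm{Ker}(L(x^\dagger))\subset\mathrm{Ker}(L(x))$ for all $x\in B_{2\rho}(x_0)$, then $x^*=x^\dagger$.
   Context: Setting. Let $X,Y$ be real Hilbert spaces. Let $\mathcal R:X\to(-\infty,\infty]$ be proper, lower semicontinuous and strongly convex with constant $\sigma>0$, i.e. $\mathcal R(t\bar x+(1-t)x)+\sigma t(1-t)\|\bar x-x\|^2\le t\mathcal R(\bar x)+(1-t)\mathcal R(x)$ for all $\bar x,x\in\mathrm{dom}(\mathcal R)$ and $t\in[0,1]$. For $\xi\in\partial\mathcal R(x)$ (subdifferential) the Bregman distance is $D_{\mathcal R}^{\xi}(z,x)=\mathcal R(z)-\mathcal R(x)-\langle\xi,z-x\rangle$. The convex conjugate $\mathcal R^*$ is differentiable with $\|\nabla\mathcal R^*(\bar\xi)-\nabla\mathcal R^*(\xi)\|\le\|\bar\xi-\xi\|/(2\sigma)$, and $\nabla\mathcal R^*(\xi)=\arg\min_{x\in X}\{\mathcal R(x)-\langle\xi,x\rangle\}$ (unique minimizer), with $\xi\in\partial\mathcal R(\nabla\mathcal R^*(\xi))$. Let $F:\mathrm{dom}(F)\subset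 X\to Y$ and $y\in Y$. Assume: (b) there are $\rho>0$, $x_0\in X$, $\xi_0\in\partial\mathcal R(x_0)$ with $B_{2\rho}(x_0):=\{x:\|x-x_0\|\le 2\rho\}\subset\mathrm{dom}(F)$, and $F(x)=y$ has a solution $\bar x$ with $D_{\mathcal R}^{\xi_0}(\bar x,x_0)\le\sigma\rho^2$; (c) $F$ is weakly closed: if $x_n\in\mathrm{dom}(F)$, $x_n\rightharpoonup x$ and $F(x_n)\to v$, then $x\in\mathrm{dom}(F)$ and $F(x)=v$; (d) there are bounded linear operators $L(x):X\to Y$, $x\in B_{2\rho}(x_0)$, with $x\mapsto L(x)$ continuous on $B_{2\rho}(x_0)$, a constant $\eta\in[0,1)$ with $\|F(x)-F(\bar x)-L(\bar x)(x-\bar x)\|\le\eta\|F(x)-F(\bar x)\|$ for all $x,\bar x\in B_{2\rho}(x_0)$, and a constant $L>0$ with $\|L(x)\|\le L$ on $B_{2\rho}(x_0)$. Under these assumptions $F(x)=y$ has a unique solution $x^\dagger\in\mathrm{dom}(F)$ minimizing $D_{\mathcal R}^{\xi_0}(x,x_0)$ over all solutions; it satisfies $\|x^\dagger-x_0\|\le\rho$. Algorithm 2 (exact data $y$). Parameters: $\beta\in(0,\infty]$, $\mu_0>0$, $\mu_1>0$, and a fixed choice of step-size rule: (constant) $\alpha_n=\mu_0/L^2$, or (adaptive) $\alpha_n=\min\{\mu_0\|r_n\|^2/\|g_n\|^2,\mu_1\}$ if $r_n\ne0$ and $\alpha_n=0$ if $r_n=0$ (with $\mu_0\|r_n\|^2/\|g_n\|^2:=+\infty$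 if $g_n=0$). Set $\xi_{-1}=\xi_0$, $x_0=\nabla\mathcal R^*(\xi_0)$. For all $n\ge0$ (no stopping): $r_n:=F(x_n)-y$, $g_n:=L(x_n)^*r_n$, $\alpha_n$ by the chosen rule; $m_n:=\xi_n-\xi_{n-1}$; $\tilde\gamma_0:=0$ and for $n\ge1$, $\tilde\gamma_n:=\langle m_n,x_n-x_{n-1}\rangle-(1-\eta)\alpha_{n-1}\|r_{n-1}\|^2+\beta_{n-1}\tilde\gamma_{n-1}$; $\beta_n:=\min\{\max\{0,(\alpha_n\langle g_n,m_n\rangle-2\sigma\tilde\gamma_n)/\|m_n\|^2\},\beta\}$ if $m_n\ne0$ and $\beta_n:=0$ if $m_n=0$; $\xi_{n+1}:=\xi_n-\alpha_ng_n+\beta_nm_n$, $x_{n+1}:=\nabla\mathcal R^*(\xi_{n+1})$. *)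

theory Defs
  imports "HOL-Analysis.Analysis" "HOL-Library.Extended_Real"
begin

definition effdom :: "('a \<Rightarrow> ereal) \<Rightarrow> 'a set" where
  "effdom R = {x. R x < \<infinity>}"

definition proper_fun :: "('a \<Rightarrow> ereal) \<Rightarrow> bool" where
  "proper_fun R \<longleftrightarrow> (\<forall>x. R x \<noteq> -\<infinity>) \<and> (\<exists>x. R x \<noteq> \<infinity>)"

definition lsc_fun :: "('a::metric_space \<Rightarrow> ereal) \<Rightarrow> bool" where
  "lsc_fun R \<longleftrightarrow> (\<forall>s x. s \<longlonglongrightarrow> x \<longrightarrow> R x \<le> liminf (\<lambda>n. R (s n)))"

definition strongly_convex :: "('a::real_normed_vector \<Rightarrow> ereal) \<Rightarrow> real \<Rightarrow> bool" where
  "strongly_convex R \<sigma> \<longleftrightarrow>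
     (\<forall>xb\<in>effdom R. \<forall>x\<in>effdom R. \<forall>t\<in>{0..1::real}.
        R (t *\<^sub>R xb + (1 - t) *\<^sub>R x) + ereal (\<sigma> * t * (1 - t) * (norm (xb - x))\<^sup>2)
          \<le> ereal t * R xb + ereal (1 - t) * R x)"

definition subdiff :: "('a::real_inner \<Rightarrow> ereal) \<Rightarrow> 'a \<Rightarrow> 'a set" where
  "subdiff R x = {\<xi>. R x < \<infinity> \<and> (\<forall>z. R x + ereal (inner \<xi> (z - x)) \<le> R z)}"

definition bregman :: "('a::real_inner \<Rightarrow> ereal) \<Rightarrow> 'a \<Rightarrow> 'a \<Rightarrow> 'a \<Rightarrow> ereal" where
  "bregman R \<xi> z x = R z - R x - ereal (inner \<xi> (z - x))"

text \<open>x is a minimizer of R(.) - <xi,.>, i.e. x = grad R^*(xi) (the minimizer is unique).\<close>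
definition is_grad_conj :: "('a::real_inner \<Rightarrow> ereal) \<Rightarrow> 'a \<Rightarrow> 'a \<Rightarrow> bool" where
  "is_grad_conj R \<xi> x \<longleftrightarrow> (\<forall>z. R x - ereal (inner \<xi> x) \<le> R z - ereal (inner \<xi> z))"

definition weak_conv :: "(nat \<Rightarrow> 'a::real_inner) \<Rightarrow> 'a \<Rightarrow> bool" where
  "weak_conv s x \<longleftrightarrow> (\<forall>v. (\<lambda>n. inner (s n) v) \<longlonglongrightarrow> inner x v)"

end

theory Submission
  imports Defs
begin

text \<open>
  Write D_n(z) for the Bregman distance of z from x_n taken with the subgradient \<xi>_n.
  While the iterates stay in the ball of radius 2\<rho> around x_0, D_n(z) decreases by at least
  \<kappa> \<alpha>_n |r_n|^2 per step for every solution z in the ball: the tangential cone condition makes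
  -g_n a descent direction, and the rule for \<beta>_n is exactly what keeps the momentum term
  \<beta>_n m_n from destroying the descent. Applied to a solution close to x_0 this keeps the
  iterates in the ball and gives \<Sum> |r_n|^2 < \<infinity> and m_n \<rightarrow> 0.

  Summability forces k |r_k|^2 to be small for infinitely many k. For such k \<ge> n \<ge> N the
  three-point identity bounds the Bregman distance between x_k and x_n by the decrease of
  D_j(z) between j = n and j = k plus terms controlled by m_n and the residuals, so (x_n) is
  Cauchy. Its limit x* solves F x = y by weak closedness, and lower semicontinuity of R turns
  the same bound into D_n(x*) \<rightarrow> 0. Under the kernel condition every \<xi>_n - \<xi>_0 is orthogonal
  to x* - x\<dagger>; this transfers the minimality of x\<dagger> from the base point x_0 to x_n, whence
  x_n \<rightarrow> x\<dagger>.
\<close>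

section \<open>Riesz representation and adjoints in Hilbert spaces\<close>

lemma quadratic_nonneg_imp_linear_coeff_eq_0:
  fixes a b :: real
  assumes "b \<ge> 0" and "\<And>t. 0 \<le> 2 * t * a + t\<^sup>2 * b"
  shows "a = 0"
proof (rule ccontr)
  assume "a \<noteq> 0"
  define t where "t = - a / (b + 1)"
  have t_mult: "t * (b + 1) = - a"
    using \<open>b \<ge> 0\<close> by (simp add: t_def)
  have "0 \<le> (b + 1)\<^sup>2 * (2 * t * a + t\<^sup>2 * b)"
    using assms by simp
  also have "\<dots> = 2 * a * (t * (b + 1)) * (b + 1) + (t * (b + 1))\<^sup>2 * b"
    by (simp add: power2_eq_square algebra_simps)
  also have "\<dots> = - (a\<^sup>2 * (b + 2))"
    unfolding t_mult by (simp add: power2_eq_square algebra_simps)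
  also have "\<dots> < 0"
    using \<open>a \<noteq> 0\<close> \<open>b \<ge> 0\<close> by simp
  finally show False by simp
qed

lemma parallelogram_law:
  fixes v w :: "'a::real_inner"
  shows "(norm (v + w))\<^sup>2 + (norm (v - w))\<^sup>2 = 2 * (norm v)\<^sup>2 + 2 * (norm w)\<^sup>2"
  by (simp add: power2_norm_eq_inner inner_diff_left inner_diff_right inner_add_left
      inner_add_right inner_commute)

lemma minimizing_sequence_Cauchy:
  fixes s :: "nat \<Rightarrow> 'a::real_inner"
  assumes midpoint: "\<And>i j. d \<le> norm ((1/2) *\<^sub>R (s i + s j))" and "0 \<le> d"
    and s_small: "\<And>n. (norm (s n))\<^sup>2 < d\<^sup>2 + 1 / Suc n"
  shows "Cauchy s"
proof (rule metric_CauchyI)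
  have s_close: "(norm (s i - s j))\<^sup>2 \<le> 2 / Suc i + 2 / Suc j" for i j
  proof -
    have "2 * d \<le> norm (s i + s j)"
      using midpoint[of i j] by simp
    then have "4 * d\<^sup>2 \<le> (norm (s i + s j))\<^sup>2"
      using \<open>0 \<le> d\<close> power_mono[of "2 * d" _ 2] by (simp add: power_mult_distrib)
    then show ?thesis
      using parallelogram_law[of "s i" "s j"] s_small[of i] s_small[of j] by linarith
  qed
  fix e :: real
  assume "e > 0"
  obtain M :: nat where M: "4 / e\<^sup>2 < M"
    using reals_Archimedean2 by blast
  show "\<exists>M. \<forall>i\<ge>M. \<forall>j\<ge>M. dist (s i) (s j) < e"
  proof (intro exI allI impI)
    fix i j
    assume "i \<ge> M" "j \<ge> M"
    then have "2 / Suc i \<le> 2 / Suc M" "2 / Suc j \<le> 2 / Suc M"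
      by (simp_all add: frac_le)
    then have "(norm (s i - s j))\<^sup>2 \<le> 4 / Suc M"
      using s_close[of i j] by simp
    also have "\<dots> < e\<^sup>2"
    proof -
      have "4 < e\<^sup>2 * M"
        using M \<open>e > 0\<close> by (simp add: field_simps)
      also have "\<dots> \<le> e\<^sup>2 * Suc M"
        by (intro mult_left_mono) auto
      finally show ?thesis
        by (simp add: divide_less_eq mult.commute)
    qed
    finally show "dist (s i) (s j) < e"
      unfolding dist_norm by (rule power_less_imp_less_base) (use \<open>e > 0\<close> in simp)
  qed
qed

lemma bounded_linear_level_set_has_min_norm:
  fixes \<phi> :: "'a::{real_inner,complete_space} \<Rightarrow> real"
  assumes "bounded_linear \<phi>" and "\<phi> v0 = 1"
  shows "\<exists>u. \<phi> u = 1 \<and> (\<forall>v. \<phi> v = 1 \<longrightarrow> norm u \<le> norm v)"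
proof -
  interpret bounded_linear \<phi> by fact
  define K where "K = {v. \<phi> v = 1}"
  define d where "d = Inf (norm ` K)"
  have bdd: "bdd_below (norm ` K)"
    by (rule bdd_belowI[of _ 0]) auto
  have d_le: "d \<le> norm v" if "v \<in> K" for v
    unfolding d_def using that bdd by (auto intro: cInf_lower)
  have d_nonneg: "0 \<le> d"
    unfolding d_def using assms(2) by (intro cInf_greatest) (auto simp: K_def)
  have "\<exists>v\<in>K. (norm v)\<^sup>2 < d\<^sup>2 + 1 / Suc n" for n
  proof -
    have "d < sqrt (d\<^sup>2 + 1 / Suc n)"
      using d_nonneg by (intro real_less_rsqrt) auto
    then obtain v where "v \<in> K" "norm v < sqrt (d\<^sup>2 + 1 / Suc n)"
      using cInf_lessD[of "norm ` K"] assms(2) unfolding d_def K_def by blast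
    then have "(norm v)\<^sup>2 < (sqrt (d\<^sup>2 + 1 / Suc n))\<^sup>2"
      by (intro power_strict_mono) auto
    then show ?thesis
      using \<open>v \<in> K\<close> by auto
  qed
  then obtain s where sK: "\<And>n. s n \<in> K" and s_small: "\<And>n. (norm (s n))\<^sup>2 < d\<^sup>2 + 1 / Suc n"
    by metis
  have "Cauchy s"
  proof (rule minimizing_sequence_Cauchy[OF _ d_nonneg s_small])
    show "d \<le> norm ((1/2) *\<^sub>R (s i + s j))" for i j
      using sK by (intro d_le) (simp add: K_def scale add)
  qed
  then obtain u where lim: "s \<longlonglongrightarrow> u"
    using Cauchy_convergent_iff convergent_def by blast
  have "(\<lambda>n. \<phi> (s n)) \<longlonglongrightarrow> \<phi> u"
    by (rule tendsto[OF lim])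
  then have "\<phi> u = 1"
    using sK by (simp add: K_def LIMSEQ_const_iff)
  have "(norm u)\<^sup>2 \<le> d\<^sup>2"
  proof (rule LIMSEQ_le)
    show "(\<lambda>n. (norm (s n))\<^sup>2) \<longlonglongrightarrow> (norm u)\<^sup>2"
      by (intro tendsto_intros lim)
    show "(\<lambda>n. d\<^sup>2 + 1 / Suc n) \<longlonglongrightarrow> d\<^sup>2"
      using tendsto_add[OF tendsto_const LIMSEQ_inverse_real_of_nat, of "d\<^sup>2"]
      by (simp add: inverse_eq_divide)
  qed (use s_small less_imp_le in blast)
  then have "norm u \<le> d"
    using d_nonneg by (rule power2_le_imp_le)
  with \<open>\<phi> u = 1\<close> show ?thesis
    using d_le unfolding K_def by force
qed

lemma riesz_representation:
  fixes \<phi> :: "'a::{real_inner,complete_space} \<Rightarrow> real"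
  assumes "bounded_linear \<phi>"
  shows "\<exists>u. \<forall>x. \<phi> x = inner x u"
proof (cases "\<forall>x. \<phi> x = 0")
  case True
  then show ?thesis by (intro exI[of _ 0]) simp
next
  case False
  interpret bounded_linear \<phi> by fact
  obtain v0 where "\<phi> v0 \<noteq> 0"
    using False by blast
  then have "\<phi> (v0 /\<^sub>R \<phi> v0) = 1"
    by (simp add: scale)
  then obtain u where u1: "\<phi> u = 1" and u_min: "\<And>v. \<phi> v = 1 \<Longrightarrow> norm u \<le> norm v"
    using bounded_linear_level_set_has_min_norm[OF assms] by blast
  \<comment> \<open>The minimal-norm point of the hyperplane \<open>\<phi> = 1\<close> is orthogonal to \<open>ker \<phi>\<close>.\<close>
  have orth: "inner u w = 0" if "\<phi> w = 0" for w
  proof (rule quadratic_nonneg_imp_linear_coeff_eq_0[of "(norm w)\<^sup>2"])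
    fix t :: real
    have "norm u \<le> norm (u + t *\<^sub>R w)"
      using u1 that by (intro u_min) (simp add: add scale)
    then have "(norm u)\<^sup>2 \<le> (norm (u + t *\<^sub>R w))\<^sup>2"
      by (simp add: power_mono)
    also have "\<dots> = (norm u)\<^sup>2 + 2 * t * inner u w + t\<^sup>2 * (norm w)\<^sup>2"
      unfolding power2_norm_eq_inner
      by (simp add: inner_add_left inner_add_right inner_commute power2_eq_square algebra_simps)
    finally show "0 \<le> 2 * t * inner u w + t\<^sup>2 * (norm w)\<^sup>2"
      by simp
  qed simp
  have "u \<noteq> 0"
    using u1 zero by auto
  show ?thesis
  proof (intro exI allI)
    fix x
    have "inner u (x - \<phi> x *\<^sub>R u) = 0"
      using u1 by (intro orth) (simp add: diff scale)
    then have "inner u x = \<phi> x * (norm u)\<^sup>2"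
      by (simp add: inner_diff_right power2_norm_eq_inner)
    then show "\<phi> x = inner x ((1 / (norm u)\<^sup>2) *\<^sub>R u)"
      using \<open>u \<noteq> 0\<close> by (simp add: inner_commute field_simps)
  qed
qed

lemma
  fixes T :: "'a::{real_inner,complete_space} \<Rightarrow>\<^sub>L 'b::real_inner"
  shows inner_adjoint_blinfun: "inner (adjoint (blinfun_apply T) w) v = inner w (T v)"
    and norm_adjoint_blinfun_le: "norm (adjoint (blinfun_apply T) w) \<le> norm T * norm w"
proof -
  have "\<exists>u. \<forall>v. inner (T v) w = inner v u" for w
    by (rule riesz_representation)
      (rule bounded_linear_compose[OF bounded_linear_inner_left blinfun.bounded_linear_right])
  then have "\<exists>f. \<forall>v w. inner (T v) w = inner v (f w)"
    by metis
  then have adj: "\<forall>v w. inner (T v) w = inner v (adjoint (blinfun_apply T) w)"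
    unfolding adjoint_def by (rule someI_ex)
  then show "inner (adjoint (blinfun_apply T) w) v = inner w (T v)"
    by (simp add: inner_commute)
  define u where "u = adjoint (blinfun_apply T) w"
  have "norm u * norm u = inner w (T u)"
    using adj by (simp add: u_def power2_norm_eq_inner inner_commute flip: power2_eq_square)
  also have "\<dots> \<le> norm w * (norm T * norm u)"
    using norm_cauchy_schwarz[of w "T u"] norm_blinfun[of T u]
    by (meson mult_left_mono norm_ge_zero order_trans)
  finally show "norm (adjoint (blinfun_apply T) w) \<le> norm T * norm w"
    unfolding u_def[symmetric]
    by (cases "u = 0") (simp_all add: algebra_simps mult_le_cancel_left_pos)
qed

section \<open>Strongly convex functionals\<close>

lemma grad_conj_imp_subdiff:
  assumes "proper_fun R" and "is_grad_conj R \<zeta> w"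
  shows "\<zeta> \<in> subdiff R w"
proof -
  have no_minf: "R v \<noteq> -\<infinity>" for v
    using assms(1) by (simp add: proper_fun_def)
  have le: "R w - ereal (inner \<zeta> w) \<le> R v - ereal (inner \<zeta> v)" for v
    using assms(2) by (simp add: is_grad_conj_def)
  obtain p where "R p \<noteq> \<infinity>"
    using assms(1) by (auto simp: proper_fun_def)
  then have "R w \<noteq> \<infinity>"
    using le[of p] no_minf[of p] by (cases "R p") auto
  then obtain a where a: "R w = ereal a"
    using no_minf[of w] by (cases "R w") auto
  have "R w + ereal (inner \<zeta> (v - w)) \<le> R v" for v
    using le[of v] no_minf[of v] a by (cases "R v") (auto simp: inner_diff_right)
  then show ?thesis
    using a by (simp add: subdiff_def)
qed

lemma strongly_convex_subgradient_lower_bound: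
  assumes sc: "strongly_convex R \<sigma>" and sub: "\<zeta> \<in> subdiff R w"
    and Rw: "R w = ereal a" and Rz: "R z = ereal b"
  shows "\<sigma> * (norm (z - w))\<^sup>2 \<le> b - a - inner \<zeta> (z - w)"
proof -
  define c where "c = inner \<zeta> (z - w)"
  define d where "d = (norm (z - w))\<^sup>2"
  \<comment> \<open>Compare the subgradient inequality at \<open>w + t(z - w)\<close> with strong convexity along the segment.\<close>
  have segment: "c + \<sigma> * (1 - t) * d \<le> b - a" if t: "0 < t" "t \<le> 1" for t
  proof -
    define p where "p = t *\<^sub>R z + (1 - t) *\<^sub>R w"
    have "z \<in> effdom R" "w \<in> effdom R"
      using Rz Rw by (auto simp: effdom_def)
    then have "R p + ereal (\<sigma> * t * (1 - t) * d) \<le> ereal t * R z + ereal (1 - t) * R w"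
      using sc t unfolding strongly_convex_def p_def d_def by auto
    then have upper: "R p + ereal (\<sigma> * t * (1 - t) * d) \<le> ereal (t * b + (1 - t) * a)"
      using Rz Rw by simp
    have "p - w = t *\<^sub>R (z - w)"
      unfolding p_def by (simp add: algebra_simps)
    moreover have "R w + ereal (inner \<zeta> (p - w)) \<le> R p"
      using sub by (simp add: subdiff_def)
    ultimately have lower: "ereal (a + t * c) \<le> R p"
      using Rw by (simp add: c_def)
    obtain q where "R p = ereal q"
      using lower upper by (cases "R p") auto
    then have "t * (c + \<sigma> * (1 - t) * d) \<le> t * (b - a)"
      using lower upper by (simp add: algebra_simps)
    then show ?thesis
      using t by simp
  qed
  have "(\<lambda>n. c + \<sigma> * (1 - 1 / Suc n) * d) \<longlonglongrightarrow> c + \<sigma> * (1 - 0) * d"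
    by (intro tendsto_intros LIMSEQ_inverse_real_of_nat[unfolded inverse_eq_divide])
  then have "(\<lambda>n. c + \<sigma> * (1 - 1 / Suc n) * d) \<longlonglongrightarrow> c + \<sigma> * d"
    by simp
  then have "c + \<sigma> * d \<le> b - a"
  proof (rule LIMSEQ_le_const2)
    show "\<exists>N. \<forall>n\<ge>N. c + \<sigma> * (1 - 1 / Suc n) * d \<le> b - a"
      using segment[of "1 / Suc _"] by (intro exI[of _ 0] allI impI) simp
  qed
  then show ?thesis
    unfolding c_def d_def by simp
qed

lemma strongly_convex_subgradient_upper_bound:
  assumes sc: "strongly_convex R \<sigma>" and "\<sigma> > 0"
    and sub: "\<zeta> \<in> subdiff R w" and sub': "\<zeta>' \<in> subdiff R w'"
    and Rw: "R w = ereal a" and Rw': "R w' = ereal a'"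
  shows "a' - a - inner \<zeta> (w' - w) \<le> (norm (\<zeta>' - \<zeta>))\<^sup>2 / (4 * \<sigma>)"
proof -
  define d where "d = norm (w' - w)"
  define e where "e = norm (\<zeta>' - \<zeta>)"
  have "\<sigma> * d\<^sup>2 \<le> a - a' - inner \<zeta>' (w - w')"
    using strongly_convex_subgradient_lower_bound[OF sc sub' Rw' Rw]
    by (simp add: d_def norm_minus_commute)
  moreover have "(a' - a - inner \<zeta> (w' - w)) + (a - a' - inner \<zeta>' (w - w')) = inner (\<zeta>' - \<zeta>) (w' - w)"
    by (simp add: inner_diff_left inner_diff_right algebra_simps)
  moreover have "inner (\<zeta>' - \<zeta>) (w' - w) \<le> e * d"
    unfolding e_def d_def by (rule norm_cauchy_schwarz)
  moreover have "e * d - \<sigma> * d\<^sup>2 \<le> e\<^sup>2 / (4 * \<sigma>)"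
  proof -
    have "4 * \<sigma> * (e * d - \<sigma> * d\<^sup>2) \<le> e\<^sup>2"
      using zero_le_power2[of "e - 2 * \<sigma> * d"] by (simp add: power2_eq_square algebra_simps)
    then show ?thesis
      using \<open>\<sigma> > 0\<close> by (simp add: le_divide_eq mult.commute)
  qed
  ultimately show ?thesis
    unfolding e_def by linarith
qed

lemma lsc_fun_le_lim:
  fixes R :: "'a::metric_space \<Rightarrow> ereal"
  assumes "lsc_fun R" and "s \<longlonglongrightarrow> u" and "\<And>j. R (s j) \<le> ereal (h j)" and "h \<longlonglongrightarrow> c"
  shows "R u \<le> ereal c"
proof -
  have "R u \<le> liminf (\<lambda>j. R (s j))"
    using assms(1,2) by (simp add: lsc_fun_def)
  also have "\<dots> \<le> liminf (\<lambda>j. ereal (h j))"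
    using assms(3) by (intro Liminf_mono always_eventually) simp
  also have "\<dots> = ereal c"
    using assms(4) by (intro lim_imp_Liminf) auto
  finally show ?thesis .
qed

section \<open>Real sequences\<close>

lemma perturbed_contraction_tendsto_0:
  fixes a b :: "nat \<Rightarrow> real"
  assumes a_nonneg: "\<And>n. 0 \<le> a n" and step: "\<And>n. a (Suc n) \<le> \<beta> * a n + b n"
    and "0 \<le> \<beta>" "\<beta> < 1" and b_lim: "b \<longlonglongrightarrow> 0"
  shows "a \<longlonglongrightarrow> 0"
proof (rule LIMSEQ_I)
  fix e :: real
  assume "0 < e"
  then have "0 < (1 - \<beta>) * e / 2"
    using \<open>\<beta> < 1\<close> by simp
  then obtain N where "\<forall>n\<ge>N. norm (b n - 0) < (1 - \<beta>) * e / 2"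
    using LIMSEQ_D[OF b_lim] by blast
  then have N: "\<And>n. n \<ge> N \<Longrightarrow> \<bar>b n\<bar> < (1 - \<beta>) * e / 2"
    by simp
  \<comment> \<open>Beyond \<open>N\<close>, the excess of \<open>a\<close> over \<open>e/2\<close> contracts geometrically.\<close>
  have geometric: "a (N + j) - e / 2 \<le> \<beta> ^ j * a N" for j
  proof (induction j)
    case 0
    then show ?case using \<open>0 < e\<close> by simp
  next
    case (Suc j)
    have "a (N + Suc j) - e / 2 \<le> \<beta> * (a (N + j) - e / 2)"
      using step[of "N + j"] N[of "N + j"] by (simp add: algebra_simps)
    also have "\<dots> \<le> \<beta> * (\<beta> ^ j * a N)"
      using Suc.IH \<open>0 \<le> \<beta>\<close> by (rule mult_left_mono)
    finally show ?case by simp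
  qed
  have "(\<lambda>j. \<beta> ^ j * a N) \<longlonglongrightarrow> 0"
    by (intro tendsto_mult_left_zero LIMSEQ_power_zero) (use \<open>0 \<le> \<beta>\<close> \<open>\<beta> < 1\<close> in simp)
  then obtain M where "\<forall>j\<ge>M. norm (\<beta> ^ j * a N - 0) < e / 2"
    using LIMSEQ_D[of _ 0 "e / 2"] \<open>0 < e\<close> by fastforce
  then have M: "\<And>j. j \<ge> M \<Longrightarrow> \<beta> ^ j * a N < e / 2"
    by (metis abs_ge_self diff_zero le_less_trans real_norm_def)
  show "\<exists>n0. \<forall>n\<ge>n0. norm (a n - 0) < e"
  proof (intro exI allI impI)
    fix n
    assume "n \<ge> N + M"
    then have "a n - e / 2 < e / 2"
      using geometric[of "n - N"] M[of "n - N"] by fastforce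
    then show "norm (a n - 0) < e"
      using a_nonneg[of n] by simp
  qed
qed

lemma perturbed_contraction_sum_le:
  fixes a b :: "nat \<Rightarrow> real"
  assumes a_nonneg: "\<And>i. 0 \<le> a i" and "0 \<le> \<beta>" and step: "\<And>i. a (Suc i) \<le> \<beta> * a i + b i"
  shows "(1 - \<beta>) * (\<Sum>i\<in>{n..n + j}. a i) \<le> a n + (\<Sum>i\<in>{n..<n + j}. b i)"
proof -
  have "(1 - \<beta>) * (\<Sum>i\<in>{n..n + j}. a i) + \<beta> * a (n + j) \<le> a n + (\<Sum>i\<in>{n..<n + j}. b i)"
  proof (induction j)
    case 0
    then show ?case by (simp add: algebra_simps)
  next
    case (Suc j)
    then show ?case
      using step[of "n + j"] by (simp add: algebra_simps)
  qed
  moreover have "0 \<le> \<beta> * a (n + j)"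
    using a_nonneg \<open>0 \<le> \<beta>\<close> by simp
  ultimately show ?thesis
    by linarith
qed

lemma summable_imp_frequently_index_mult_le:
  fixes a :: "nat \<Rightarrow> real"
  assumes "summable a" and "\<delta> > 0"
  shows "\<exists>k\<ge>K. real k * a k \<le> \<delta>"
proof (rule ccontr)
  assume "\<not> ?thesis"
  then have big: "\<delta> < real k * a k" if "k \<ge> K" for k
    using that not_le by blast
  \<comment> \<open>Otherwise \<open>a\<close> would dominate a multiple of the harmonic series.\<close>
  have "summable (\<lambda>k. inverse (real k))"
  proof (rule summable_comparison_test[OF _ summable_mult[OF \<open>summable a\<close>, of "1 / \<delta>"]])
    have "norm (inverse (real k)) \<le> 1 / \<delta> * a k" if "k \<ge> max K 1" for k
      using big[of k] that \<open>\<delta> > 0\<close> by (simp add: field_simps)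
    then show "\<exists>N. \<forall>k\<ge>N. norm (inverse (real k)) \<le> 1 / \<delta> * a k"
      by blast
  qed
  then show False
    using not_summable_harmonic[where 'a = real] by simp
qed

section \<open>Algorithm 2 with exact data\<close>

locale heavy_ball_landweber =
  fixes R :: "'a::{real_inner,complete_space} \<Rightarrow> ereal"
    and F :: "'a \<Rightarrow> 'b::{real_inner,complete_space}"
    and domF :: "'a set"
    and y :: 'b
    and L :: "'a \<Rightarrow> ('a \<Rightarrow>\<^sub>L 'b)"
    and \<sigma> \<rho> \<eta> Lc \<mu>0 \<mu>1 \<beta> :: real
    and x0 \<xi>0 :: 'a
    and adaptive :: bool
    and \<xi> x m g :: "nat \<Rightarrow> 'a"
    and r :: "nat \<Rightarrow> 'b"
    and \<alpha> bt gt :: "nat \<Rightarrow> real"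
  assumes R_proper: "proper_fun R"
    and R_lsc: "lsc_fun R"
    and \<sigma>_pos: "\<sigma> > 0"
    and R_sconv: "strongly_convex R \<sigma>"
    and \<rho>_pos: "\<rho> > 0"
    and ball_domF: "cball x0 (2 * \<rho>) \<subseteq> domF"
    and sol_exists: "\<exists>xb\<in>domF. F xb = y \<and> bregman R \<xi>0 xb x0 \<le> ereal (\<sigma> * \<rho>\<^sup>2)"
    and F_wclosed: "\<And>s u v. (\<forall>n. s n \<in> domF) \<Longrightarrow> weak_conv s u \<Longrightarrow>
                       (\<lambda>n. F (s n)) \<longlonglongrightarrow> v \<Longrightarrow> u \<in> domF \<and> F u = v"
    and \<eta>_range: "0 \<le> \<eta>" "\<eta> < 1"
    and tcc: "\<And>u ub. u \<in> cball x0 (2 * \<rho>) \<Longrightarrow> ub \<in> cball x0 (2 * \<rho>) \<Longrightarrow>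
               norm (F u - F ub - L ub (u - ub)) \<le> \<eta> * norm (F u - F ub)"
    and Lc_pos: "Lc > 0"
    and L_bound: "\<And>u. u \<in> cball x0 (2 * \<rho>) \<Longrightarrow> norm (L u) \<le> Lc"
    and \<mu>0_range: "0 < \<mu>0" "\<mu>0 < 4 * \<sigma> * (1 - \<eta>)"
    and \<mu>1_pos: "\<mu>1 > 0"
    and \<beta>_range: "0 < \<beta>" "\<beta> < 1"
    and x_init: "x 0 = x0"
    and \<xi>_init: "\<xi> 0 = \<xi>0"
    and x_grad: "\<And>n. is_grad_conj R (\<xi> n) (x n)"
    and r_def: "\<And>n. r n = F (x n) - y"
    and g_def: "\<And>n. g n = adjoint (blinfun_apply (L (x n))) (r n)"
    and \<alpha>_def: "\<And>n. \<alpha> n =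
          (if adaptive then
             (if r n = 0 then 0
              else if g n = 0 then \<mu>1
              else min (\<mu>0 * (norm (r n))\<^sup>2 / (norm (g n))\<^sup>2) \<mu>1)
           else \<mu>0 / Lc\<^sup>2)"
    and m_def: "\<And>n. m n = (if n = 0 then \<xi> 0 - \<xi>0 else \<xi> n - \<xi> (n - 1))"
    and gt_0: "gt 0 = 0"
    and gt_Suc: "\<And>n. gt (Suc n) = inner (m (Suc n)) (x (Suc n) - x n)
                   - (1 - \<eta>) * \<alpha> n * (norm (r n))\<^sup>2 + bt n * gt n"
    and bt_def: "\<And>n. bt n = (if m n = 0 then 0
                   else min (max 0 ((\<alpha> n * inner (g n) (m n) - 2 * \<sigma> * gt n) / (norm (m n))\<^sup>2)) \<beta>)"
    and \<xi>_Suc: "\<And>n. \<xi> (Suc n) = \<xi> n - \<alpha> n *\<^sub>R g n + bt n *\<^sub>R m n"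
begin

abbreviation "B \<equiv> cball x0 (2 * \<rho>)"

definition "solution z \<longleftrightarrow> z \<in> B \<and> F z = y"

definition "Rr z = real_of_ereal (R z)"

text \<open>Only meaningful where \<open>R\<close> is finite, since \<open>real_of_ereal\<close> sends \<open>\<plusminus>\<infinity>\<close> to \<open>0\<close>.\<close>
definition "D \<zeta> z w = Rr z - Rr w - inner \<zeta> (z - w)"

definition "\<kappa> = 1 - \<eta> - \<mu>0 / (4 * \<sigma>)"

definition "\<alpha>_max = max (\<mu>0 / Lc\<^sup>2) \<mu>1"

definition "\<alpha>_min = min (\<mu>0 / Lc\<^sup>2) \<mu>1"

lemma \<kappa>_pos: "\<kappa> > 0"
  using \<mu>0_range \<sigma>_pos by (simp add: \<kappa>_def divide_less_eq mult.commute)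

lemma \<alpha>_min_pos: "\<alpha>_min > 0"
  using \<mu>0_range \<mu>1_pos Lc_pos by (simp add: \<alpha>_min_def)

lemma \<alpha>_max_nonneg: "\<alpha>_max \<ge> 0"
  using \<mu>1_pos by (simp add: \<alpha>_max_def)

lemma R_finite: "R z \<noteq> \<infinity> \<Longrightarrow> R z = ereal (Rr z)"
  using R_proper by (cases "R z") (auto simp: proper_fun_def Rr_def)

lemma bregman_eq_D: "R z \<noteq> \<infinity> \<Longrightarrow> R w \<noteq> \<infinity> \<Longrightarrow> bregman R \<zeta> z w = ereal (D \<zeta> z w)"
  by (simp add: bregman_def D_def R_finite)

lemma D_three_point: "D \<zeta>' z w' - D \<zeta> z w = D \<zeta>' w w' + inner (\<zeta>' - \<zeta>) (w - z)"
  by (simp add: D_def inner_diff_left inner_diff_right algebra_simps)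

lemma subdiff_x: "\<xi> n \<in> subdiff R (x n)"
  by (rule grad_conj_imp_subdiff[OF R_proper x_grad])

lemma R_x_finite: "R (x n) \<noteq> \<infinity>"
  using subdiff_x by (simp add: subdiff_def)

lemma D_lower: "R z \<noteq> \<infinity> \<Longrightarrow> \<sigma> * (norm (z - x n))\<^sup>2 \<le> D (\<xi> n) z (x n)"
  unfolding D_def
  by (rule strongly_convex_subgradient_lower_bound[OF R_sconv subdiff_x])
    (simp_all add: R_finite R_x_finite)

lemma D_x_upper: "D (\<xi> n) (x k) (x n) \<le> (norm (\<xi> k - \<xi> n))\<^sup>2 / (4 * \<sigma>)"
  unfolding D_def
  by (rule strongly_convex_subgradient_upper_bound[OF R_sconv \<sigma>_pos subdiff_x subdiff_x])
    (simp_all add: R_finite R_x_finite)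

lemma bregman_le_imp_near_x0:
  assumes "bregman R \<xi>0 z x0 \<le> ereal (\<sigma> * \<rho>\<^sup>2)"
  shows "R z \<noteq> \<infinity>" and "D \<xi>0 z x0 \<le> \<sigma> * \<rho>\<^sup>2" and "dist x0 z \<le> \<rho>"
proof -
  have Rx0: "R x0 \<noteq> \<infinity>"
    using R_x_finite[of 0] x_init by simp
  then show Rz: "R z \<noteq> \<infinity>"
    using assms by (auto simp: bregman_def R_finite[OF Rx0])
  show D_le: "D \<xi>0 z x0 \<le> \<sigma> * \<rho>\<^sup>2"
    using assms by (simp add: bregman_eq_D[OF Rz Rx0])
  have "\<sigma> * (norm (z - x0))\<^sup>2 \<le> \<sigma> * \<rho>\<^sup>2"
    using D_lower[OF Rz, of 0] D_le by (simp add: x_init \<xi>_init)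
  then have "(norm (z - x0))\<^sup>2 \<le> \<rho>\<^sup>2"
    using \<sigma>_pos by simp
  then have "norm (z - x0) \<le> \<rho>"
    by (rule power2_le_imp_le) (use \<rho>_pos in simp)
  then show "dist x0 z \<le> \<rho>"
    by (metis dist_commute dist_norm)
qed

lemma m_0: "m 0 = 0"
  using m_def[of 0] \<xi>_init by simp

lemma m_Suc_eq: "m (Suc n) = \<xi> (Suc n) - \<xi> n"
  using m_def[of "Suc n"] by simp

lemma m_Suc: "m (Suc n) = bt n *\<^sub>R m n - \<alpha> n *\<^sub>R g n"
  by (simp add: m_Suc_eq \<xi>_Suc algebra_simps)

lemma inner_g: "inner (g n) v = inner (r n) (L (x n) v)"
  unfolding g_def by (rule inner_adjoint_blinfun)

lemma norm_g_le: "x n \<in> B \<Longrightarrow> norm (g n) \<le> Lc * norm (r n)"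
  using norm_adjoint_blinfun_le[of "L (x n)" "r n"] L_bound[of "x n"]
    mult_right_mono[of "norm (L (x n))" Lc "norm (r n)"]
  by (simp add: g_def)

lemma bt_nonneg: "0 \<le> bt n"
  using \<beta>_range by (simp add: bt_def)

lemma bt_le_\<beta>: "bt n \<le> \<beta>"
  using \<beta>_range by (simp add: bt_def)

text \<open>This is what the choice of \<open>\<beta>\<^sub>n\<close> in the algorithm is designed to guarantee.\<close>
lemma bt_momentum_bound:
  "bt n * (bt n * (norm (m n))\<^sup>2 - 2 * \<alpha> n * inner (g n) (m n) + 4 * \<sigma> * gt n) \<le> 0"
proof (cases "bt n = 0")
  case False
  then have "m n \<noteq> 0"
    by (auto simp: bt_def)
  define q where "q = (\<alpha> n * inner (g n) (m n) - 2 * \<sigma> * gt n) / (norm (m n))\<^sup>2"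
  have m_pos: "(norm (m n))\<^sup>2 > 0"
    using \<open>m n \<noteq> 0\<close> by simp
  have "bt n = min (max 0 q) \<beta>"
    using \<open>m n \<noteq> 0\<close> by (simp add: bt_def q_def)
  moreover have "0 < bt n"
    using False bt_nonneg[of n] by simp
  ultimately have "0 < q" "bt n \<le> q"
    using \<beta>_range by (auto simp: min_def max_def split: if_splits)
  then have "bt n * (norm (m n))\<^sup>2 \<le> \<alpha> n * inner (g n) (m n) - 2 * \<sigma> * gt n"
    using m_pos mult_right_mono[of "bt n" q "(norm (m n))\<^sup>2"] by (simp add: q_def)
  moreover have "0 \<le> \<alpha> n * inner (g n) (m n) - 2 * \<sigma> * gt n"
    using \<open>0 < q\<close> m_pos by (simp add: q_def zero_less_divide_iff)
  ultimately have "bt n * (norm (m n))\<^sup>2 - 2 * \<alpha> n * inner (g n) (m n) + 4 * \<sigma> * gt n \<le> 0"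
    by linarith
  then show ?thesis
    using \<open>0 < bt n\<close> by (simp add: mult_nonneg_nonpos)
qed simp

lemma \<alpha>_nonneg: "0 \<le> \<alpha> n"
  using \<mu>0_range \<mu>1_pos Lc_pos by (simp add: \<alpha>_def)

lemma \<alpha>_le_max: "\<alpha> n \<le> \<alpha>_max"
  using \<mu>1_pos by (auto simp: \<alpha>_def \<alpha>_max_def min_def)

lemma \<alpha>_norm_g_le:
  assumes "x n \<in> B"
  shows "\<alpha> n * (norm (g n))\<^sup>2 \<le> \<mu>0 * (norm (r n))\<^sup>2"
proof (cases adaptive)
  case False
  have "(norm (g n))\<^sup>2 \<le> Lc\<^sup>2 * (norm (r n))\<^sup>2"
    using norm_g_le[OF assms] by (metis norm_ge_zero power_mono power_mult_distrib)
  then have "(norm (g n))\<^sup>2 / Lc\<^sup>2 \<le> (norm (r n))\<^sup>2"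
    using Lc_pos by (simp add: divide_le_eq mult.commute)
  then have "\<mu>0 * ((norm (g n))\<^sup>2 / Lc\<^sup>2) \<le> \<mu>0 * (norm (r n))\<^sup>2"
    using \<mu>0_range by (intro mult_left_mono) auto
  then show ?thesis
    using False by (simp add: \<alpha>_def)
next
  case True
  show ?thesis
  proof (cases "g n = 0")
    case True
    then show ?thesis
      using \<mu>0_range by simp
  next
    case False
    have "r n \<noteq> 0"
      using False norm_g_le[OF assms] by auto
    with \<open>adaptive\<close> False have "\<alpha> n \<le> \<mu>0 * (norm (r n))\<^sup>2 / (norm (g n))\<^sup>2"
      by (simp add: \<alpha>_def)
    then have "\<alpha> n * (norm (g n))\<^sup>2 \<le> \<mu>0 * (norm (r n))\<^sup>2 / (norm (g n))\<^sup>2 * (norm (g n))\<^sup>2"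
      by (rule mult_right_mono) simp
    with False show ?thesis
      by simp
  qed
qed

lemma \<alpha>_ge_min:
  assumes "x n \<in> B" and "r n \<noteq> 0"
  shows "\<alpha>_min \<le> \<alpha> n"
proof (cases "adaptive \<and> g n \<noteq> 0")
  case True
  have "(norm (g n))\<^sup>2 \<le> Lc\<^sup>2 * (norm (r n))\<^sup>2"
    using norm_g_le[OF assms(1)] by (metis norm_ge_zero power_mono power_mult_distrib)
  then have "\<mu>0 / Lc\<^sup>2 \<le> \<mu>0 * (norm (r n))\<^sup>2 / (norm (g n))\<^sup>2"
    using True Lc_pos \<mu>0_range by (simp add: field_simps mult_left_mono)
  then show ?thesis
    using True assms(2) by (auto simp: \<alpha>_def \<alpha>_min_def min_def)
next
  case False
  then show ?thesis
    using assms(2) by (auto simp: \<alpha>_def \<alpha>_min_def)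
qed

lemma tcc_linear_bound:
  assumes "u \<in> B" "ub \<in> B"
  shows "norm (L ub (u - ub)) \<le> (1 + \<eta>) * norm (F u - F ub)"
proof -
  have "norm (L ub (u - ub)) \<le> norm (F u - F ub) + norm (F u - F ub - L ub (u - ub))"
    using norm_triangle_ineq4[of "F u - F ub" "F u - F ub - L ub (u - ub)"] by simp
  then show ?thesis
    using tcc[OF assms] by (simp add: algebra_simps)
qed

lemma tcc_residual_lower:
  assumes "x n \<in> B" and "solution z"
  shows "(1 - \<eta>) * (norm (r n))\<^sup>2 \<le> inner (r n) (L (x n) (x n - z))"
proof -
  define e where "e = F z - F (x n) - L (x n) (z - x n)"
  have "z \<in> B" "F z = y"
    using assms(2) by (auto simp: solution_def)
  then have e_le: "norm e \<le> \<eta> * norm (r n)"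
    using tcc[of z "x n"] assms(1) by (simp add: e_def r_def norm_minus_commute)
  have "L (x n) (x n - z) = r n + e"
    using \<open>F z = y\<close> by (simp add: e_def r_def blinfun.diff_right algebra_simps)
  moreover have "inner (r n) (r n + e) = (norm (r n))\<^sup>2 + inner (r n) e"
    by (simp add: inner_add_right power2_norm_eq_inner)
  moreover have "- inner (r n) e \<le> norm (r n) * (\<eta> * norm (r n))"
    using norm_cauchy_schwarz[of "r n" "- e"] e_le
    by (metis inner_minus_right mult_left_mono norm_ge_zero norm_minus_cancel order_trans)
  ultimately show ?thesis
    by (simp add: power2_eq_square algebra_simps)
qed

text \<open>The scalar \<open>gt n\<close> is a computable upper bound for \<open>inner (m n) (x n - z)\<close>, valid for
  every solution \<open>z\<close> simultaneously; the algorithm uses it in place of the unknown solution.\<close>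

lemma inner_m_Suc_le:
  assumes "x n \<in> B" and "solution z" and "inner (m n) (x n - z) \<le> gt n"
  shows "inner (m (Suc n)) (x n - z) \<le> bt n * gt n - (1 - \<eta>) * \<alpha> n * (norm (r n))\<^sup>2"
proof -
  have "inner (m (Suc n)) (x n - z)
      = bt n * inner (m n) (x n - z) - \<alpha> n * inner (r n) (L (x n) (x n - z))"
    by (simp add: m_Suc inner_diff_left inner_g)
  moreover have "bt n * inner (m n) (x n - z) \<le> bt n * gt n"
    using assms(3) bt_nonneg by (rule mult_left_mono)
  moreover have "\<alpha> n * ((1 - \<eta>) * (norm (r n))\<^sup>2) \<le> \<alpha> n * inner (r n) (L (x n) (x n - z))"
    using tcc_residual_lower[OF assms(1,2)] \<alpha>_nonneg by (rule mult_left_mono)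
  ultimately show ?thesis
    by (simp add: algebra_simps)
qed

lemma inner_m_le_gt_Suc:
  assumes "x n \<in> B" and "solution z" and "inner (m n) (x n - z) \<le> gt n"
  shows "inner (m (Suc n)) (x (Suc n) - z) \<le> gt (Suc n)"
  using inner_m_Suc_le[OF assms] gt_Suc[of n]
  by (simp add: inner_diff_right algebra_simps)

lemma D_descent_step:
  assumes "x n \<in> B" and "solution z" and "inner (m n) (x n - z) \<le> gt n"
  shows "D (\<xi> (Suc n)) z (x (Suc n)) \<le> D (\<xi> n) z (x n) - \<kappa> * (\<alpha> n * (norm (r n))\<^sup>2)"
proof -
  define a where "a = \<alpha> n * (norm (r n))\<^sup>2"
  have "4 * \<sigma> * D (\<xi> (Suc n)) (x n) (x (Suc n)) \<le> (norm (m (Suc n)))\<^sup>2"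
    using D_x_upper[of "Suc n" n] \<sigma>_pos by (simp add: m_Suc_eq norm_minus_commute field_simps)
  also have "\<dots> = (bt n)\<^sup>2 * (norm (m n))\<^sup>2 - 2 * bt n * \<alpha> n * inner (g n) (m n)
      + (\<alpha> n)\<^sup>2 * (norm (g n))\<^sup>2"
    unfolding m_Suc power2_norm_eq_inner
    by (simp add: inner_diff_left inner_diff_right inner_commute power2_eq_square algebra_simps)
  also have "\<dots> \<le> - 4 * \<sigma> * (bt n * gt n) + \<mu>0 * a"
  proof -
    have "(\<alpha> n)\<^sup>2 * (norm (g n))\<^sup>2 \<le> \<alpha> n * (\<mu>0 * (norm (r n))\<^sup>2)"
      using mult_left_mono[OF \<alpha>_norm_g_le[OF assms(1)] \<alpha>_nonneg[of n]]
      by (simp add: power2_eq_square)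
    then show ?thesis
      using bt_momentum_bound[of n] by (simp add: a_def power2_eq_square algebra_simps)
  qed
  finally have bregman_part: "4 * \<sigma> * D (\<xi> (Suc n)) (x n) (x (Suc n))
      \<le> - 4 * \<sigma> * (bt n * gt n) + \<mu>0 * a" .
  have momentum_part: "4 * \<sigma> * inner (m (Suc n)) (x n - z) \<le> 4 * \<sigma> * (bt n * gt n - (1 - \<eta>) * a)"
    using mult_left_mono[OF inner_m_Suc_le[OF assms], of "4 * \<sigma>"] \<sigma>_pos
    by (simp add: a_def mult.assoc)
  have "4 * \<sigma> * (D (\<xi> (Suc n)) z (x (Suc n)) - D (\<xi> n) z (x n))
      = 4 * \<sigma> * D (\<xi> (Suc n)) (x n) (x (Suc n)) + 4 * \<sigma> * inner (m (Suc n)) (x n - z)"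
    unfolding D_three_point by (simp add: m_Suc_eq distrib_left)
  also have "\<dots> \<le> (- 4 * \<sigma> * (bt n * gt n) + \<mu>0 * a) + 4 * \<sigma> * (bt n * gt n - (1 - \<eta>) * a)"
    using bregman_part momentum_part by (rule add_mono)
  also have "\<dots> = 4 * \<sigma> * (- \<kappa> * a)"
    using \<sigma>_pos by (simp add: \<kappa>_def field_simps)
  finally have "D (\<xi> (Suc n)) z (x (Suc n)) - D (\<xi> n) z (x n) \<le> - \<kappa> * a"
    by (rule mult_left_le_imp_le) (use \<sigma>_pos in simp)
  then show ?thesis
    by (simp add: a_def)
qed

lemma descent_invariant:
  assumes "solution z" and "\<forall>k<n. x k \<in> B"
  shows "inner (m n) (x n - z) \<le> gt n
    \<and> D (\<xi> n) z (x n) + \<kappa> * (\<Sum>k<n. \<alpha> k * (norm (r k))\<^sup>2) \<le> D \<xi>0 z x0"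
  using assms(2)
proof (induction n)
  case 0
  then show ?case
    by (simp add: m_0 gt_0 x_init \<xi>_init)
next
  case (Suc n)
  then have "x n \<in> B" and IH: "inner (m n) (x n - z) \<le> gt n"
      "D (\<xi> n) z (x n) + \<kappa> * (\<Sum>k<n. \<alpha> k * (norm (r k))\<^sup>2) \<le> D \<xi>0 z x0"
    by auto
  then show ?case
    using inner_m_le_gt_Suc D_descent_step assms(1) by (fastforce simp: algebra_simps)
qed

definition "x_ref = (SOME z. z \<in> domF \<and> F z = y \<and> bregman R \<xi>0 z x0 \<le> ereal (\<sigma> * \<rho>\<^sup>2))"

lemma x_ref: "R x_ref \<noteq> \<infinity>" "D \<xi>0 x_ref x0 \<le> \<sigma> * \<rho>\<^sup>2" "dist x0 x_ref \<le> \<rho>" "solution x_ref"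
proof -
  have "x_ref \<in> domF \<and> F x_ref = y \<and> bregman R \<xi>0 x_ref x0 \<le> ereal (\<sigma> * \<rho>\<^sup>2)"
    unfolding x_ref_def by (rule someI_ex) (use sol_exists in blast)
  then have "F x_ref = y" and near: "bregman R \<xi>0 x_ref x0 \<le> ereal (\<sigma> * \<rho>\<^sup>2)"
    by blast+
  show "R x_ref \<noteq> \<infinity>" "D \<xi>0 x_ref x0 \<le> \<sigma> * \<rho>\<^sup>2" "dist x0 x_ref \<le> \<rho>"
    using bregman_le_imp_near_x0[OF near] by blast+
  then show "solution x_ref"
    using \<open>F x_ref = y\<close> \<rho>_pos by (simp add: solution_def)
qed

lemma x_in_B: "x n \<in> B"
proof (induction n rule: less_induct)
  case (less n)
  then have "D (\<xi> n) x_ref (x n) + \<kappa> * (\<Sum>k<n. \<alpha> k * (norm (r k))\<^sup>2) \<le> D \<xi>0 x_ref x0"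
    using descent_invariant[OF x_ref(4)] by blast
  moreover have "0 \<le> \<kappa> * (\<Sum>k<n. \<alpha> k * (norm (r k))\<^sup>2)"
    using \<kappa>_pos \<alpha>_nonneg by (intro mult_nonneg_nonneg sum_nonneg) auto
  ultimately have "\<sigma> * (norm (x_ref - x n))\<^sup>2 \<le> \<sigma> * \<rho>\<^sup>2"
    using D_lower[OF x_ref(1), of n] x_ref(2) by linarith
  then have "(norm (x_ref - x n))\<^sup>2 \<le> \<rho>\<^sup>2"
    using \<sigma>_pos by simp
  then have "dist x_ref (x n) \<le> \<rho>"
    unfolding dist_norm by (rule power2_le_imp_le) (use \<rho>_pos in simp)
  then show ?case
    using x_ref(3) dist_triangle[of x0 "x n" x_ref] by simp
qed

lemma D_solution_bound:
  assumes "solution z"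
  shows "D (\<xi> n) z (x n) + \<kappa> * (\<Sum>k<n. \<alpha> k * (norm (r k))\<^sup>2) \<le> D \<xi>0 z x0"
  using descent_invariant[OF assms] x_in_B by blast

lemma D_solution_decseq:
  assumes "solution z"
  shows "decseq (\<lambda>n. D (\<xi> n) z (x n))"
proof (rule decseq_SucI)
  fix n
  have "D (\<xi> (Suc n)) z (x (Suc n)) \<le> D (\<xi> n) z (x n) - \<kappa> * (\<alpha> n * (norm (r n))\<^sup>2)"
    by (rule D_descent_step[OF x_in_B assms]) (use descent_invariant[OF assms] x_in_B in blast)
  moreover have "0 \<le> \<kappa> * (\<alpha> n * (norm (r n))\<^sup>2)"
    using \<kappa>_pos \<alpha>_nonneg by simp
  ultimately show "D (\<xi> (Suc n)) z (x (Suc n)) \<le> D (\<xi> n) z (x n)"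
    by linarith
qed

lemma D_x_ref_nonneg: "0 \<le> D (\<xi> n) x_ref (x n)"
proof -
  have "0 \<le> \<sigma> * (norm (x_ref - x n))\<^sup>2"
    using \<sigma>_pos by simp
  then show ?thesis
    using D_lower[OF x_ref(1), of n] by linarith
qed

lemma summable_\<alpha>_r: "summable (\<lambda>k. \<alpha> k * (norm (r k))\<^sup>2)"
proof (rule summableI_nonneg_bounded)
  fix n
  have "\<kappa> * (\<Sum>k<n. \<alpha> k * (norm (r k))\<^sup>2) \<le> D \<xi>0 x_ref x0"
    using D_solution_bound[OF x_ref(4), of n] D_x_ref_nonneg[of n] by linarith
  then show "(\<Sum>k<n. \<alpha> k * (norm (r k))\<^sup>2) \<le> D \<xi>0 x_ref x0 / \<kappa>"
    using \<kappa>_pos by (simp add: le_divide_eq mult.commute)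
qed (simp add: \<alpha>_nonneg)

lemma summable_r: "summable (\<lambda>k. (norm (r k))\<^sup>2)"
proof (rule summable_comparison_test[OF _ summable_mult[OF summable_\<alpha>_r, of "1 / \<alpha>_min"]])
  have "(norm (r k))\<^sup>2 \<le> 1 / \<alpha>_min * (\<alpha> k * (norm (r k))\<^sup>2)" for k
  proof (cases "r k = 0")
    case False
    then have "\<alpha>_min * (norm (r k))\<^sup>2 \<le> \<alpha> k * (norm (r k))\<^sup>2"
      using \<alpha>_ge_min[OF x_in_B] by (intro mult_right_mono) auto
    then show ?thesis
      using \<alpha>_min_pos by (simp add: pos_le_divide_eq mult.commute)
  qed simp
  then show "\<exists>N. \<forall>k\<ge>N. norm ((norm (r k))\<^sup>2) \<le> 1 / \<alpha>_min * (\<alpha> k * (norm (r k))\<^sup>2)"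
    by simp
qed

lemma r_tendsto_0: "r \<longlonglongrightarrow> 0"
proof -
  have "(\<lambda>k. sqrt ((norm (r k))\<^sup>2)) \<longlonglongrightarrow> sqrt 0"
    by (intro tendsto_real_sqrt summable_LIMSEQ_zero[OF summable_r])
  then have "(\<lambda>k. norm (r k)) \<longlonglongrightarrow> 0"
    by simp
  then show ?thesis
    by (simp only: tendsto_norm_zero_iff)
qed

lemma m_tendsto_0: "(\<lambda>n. norm (m n)) \<longlonglongrightarrow> 0"
proof (rule perturbed_contraction_tendsto_0)
  fix n
  have "norm (m (Suc n)) \<le> bt n * norm (m n) + \<alpha> n * norm (g n)"
    using norm_triangle_ineq4[of "bt n *\<^sub>R m n" "\<alpha> n *\<^sub>R g n"] bt_nonneg \<alpha>_nonneg
    by (simp add: m_Suc)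
  also have "\<dots> \<le> \<beta> * norm (m n) + \<alpha>_max * (Lc * norm (r n))"
    using bt_le_\<beta> \<alpha>_le_max \<alpha>_nonneg norm_g_le[OF x_in_B] \<alpha>_max_nonneg \<beta>_range
    by (intro add_mono mult_mono) auto
  finally show "norm (m (Suc n)) \<le> \<beta> * norm (m n) + \<alpha>_max * Lc * norm (r n)"
    by (simp add: mult.assoc)
  show "(\<lambda>n. \<alpha>_max * Lc * norm (r n)) \<longlonglongrightarrow> 0"
    using tendsto_mult_right_zero[OF tendsto_norm_zero[OF r_tendsto_0]] by simp
qed (use \<beta>_range in auto)

lemma inner_\<xi>_diff_bound:
  "(1 - \<beta>) * \<bar>inner (\<xi> (n + j) - \<xi> n) w\<bar>
     \<le> norm (m n) * norm w + (\<Sum>i\<in>{n..<n + j}. \<alpha> i * \<bar>inner (r i) (L (x i) w)\<bar>)"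
proof -
  define a where "a i = \<bar>inner (m i) w\<bar>" for i
  define b where "b i = \<alpha> i * \<bar>inner (r i) (L (x i) w)\<bar>" for i
  have step: "a (Suc i) \<le> \<beta> * a i + b i" for i
  proof -
    have "a (Suc i) \<le> bt i * a i + b i"
      using abs_triangle_ineq4[of "bt i * inner (m i) w" "\<alpha> i * inner (r i) (L (x i) w)"]
        bt_nonneg[of i] \<alpha>_nonneg[of i]
      by (simp add: a_def b_def m_Suc inner_diff_left inner_g abs_mult)
    also have "\<dots> \<le> \<beta> * a i + b i"
      using bt_le_\<beta>[of i] by (simp add: a_def mult_right_mono)
    finally show ?thesis .
  qed
  have "\<bar>inner (\<xi> (n + j) - \<xi> n) w\<bar> \<le> (\<Sum>i\<in>{n..n + j}. a i)" for j
  proof (induction j)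
    case (Suc j)
    have "inner (\<xi> (n + Suc j) - \<xi> n) w = inner (\<xi> (n + j) - \<xi> n) w + inner (m (Suc (n + j))) w"
      by (simp add: m_Suc_eq inner_diff_left)
    then have "\<bar>inner (\<xi> (n + Suc j) - \<xi> n) w\<bar> \<le> \<bar>inner (\<xi> (n + j) - \<xi> n) w\<bar> + a (Suc (n + j))"
      unfolding a_def by (metis abs_triangle_ineq)
    then show ?case
      using Suc.IH by simp
  qed (simp add: a_def)
  then have "(1 - \<beta>) * \<bar>inner (\<xi> (n + j) - \<xi> n) w\<bar> \<le> (1 - \<beta>) * (\<Sum>i\<in>{n..n + j}. a i)"
    using \<beta>_range by (intro mult_left_mono) auto
  also have "\<dots> \<le> a n + (\<Sum>i\<in>{n..<n + j}. b i)"
    by (rule perturbed_contraction_sum_le) (use step \<beta>_range in \<open>auto simp: a_def\<close>)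
  also have "a n \<le> norm (m n) * norm w"
    unfolding a_def by (rule Cauchy_Schwarz_ineq2)
  finally show ?thesis
    by (simp add: b_def)
qed

lemma residual_inner_bound:
  assumes "solution z"
  shows "\<bar>inner (r i) (L (x i) (x k - z))\<bar> \<le> (1 + \<eta>) * norm (r i) * (norm (r k) + 2 * norm (r i))"
proof -
  have "z \<in> B" "F z = y"
    using assms by (auto simp: solution_def)
  have "norm (L (x i) (x k - x i)) \<le> (1 + \<eta>) * norm (r k - r i)"
    using tcc_linear_bound[OF x_in_B x_in_B] by (simp add: r_def)
  also have "\<dots> \<le> (1 + \<eta>) * (norm (r k) + norm (r i))"
    using \<eta>_range by (intro mult_left_mono norm_triangle_ineq4) auto
  finally have xk: "norm (L (x i) (x k - x i)) \<le> (1 + \<eta>) * (norm (r k) + norm (r i))" .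
  have z: "norm (L (x i) (z - x i)) \<le> (1 + \<eta>) * norm (r i)"
    using tcc_linear_bound[OF \<open>z \<in> B\<close> x_in_B] \<open>F z = y\<close>
    by (simp add: r_def norm_minus_commute)
  have "norm (L (x i) (x k - z)) \<le> norm (L (x i) (x k - x i)) + norm (L (x i) (z - x i))"
    using norm_triangle_ineq4[of "L (x i) (x k - x i)" "L (x i) (z - x i)"]
    by (simp add: blinfun.diff_right)
  also have "\<dots> \<le> (1 + \<eta>) * (norm (r k) + 2 * norm (r i))"
    using xk z by (simp add: algebra_simps)
  finally have "norm (r i) * norm (L (x i) (x k - z)) \<le> norm (r i) * ((1 + \<eta>) * (norm (r k) + 2 * norm (r i)))"
    by (rule mult_left_mono) simp
  then show ?thesis
    using Cauchy_Schwarz_ineq2[of "r i" "L (x i) (x k - z)"] by (simp add: algebra_simps)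
qed

lemma \<alpha>_residual_inner_le:
  "\<alpha> i * \<bar>inner (r i) (L (x i) (x k - x_ref))\<bar>
     \<le> \<alpha>_max * (1 + \<eta>) * (3 * (norm (r i))\<^sup>2 + (norm (r k))\<^sup>2)"
proof -
  have "2 * norm (r i) * norm (r k) \<le> (norm (r i))\<^sup>2 + (norm (r k))\<^sup>2"
    using zero_le_power2[of "norm (r i) - norm (r k)"] by (simp add: power2_diff)
  moreover have "0 \<le> norm (r i) * norm (r k)"
    by simp
  moreover have "norm (r i) * (norm (r k) + 2 * norm (r i)) = norm (r i) * norm (r k) + 2 * (norm (r i))\<^sup>2"
    by (simp add: algebra_simps power2_eq_square)
  ultimately have "norm (r i) * (norm (r k) + 2 * norm (r i)) \<le> 3 * (norm (r i))\<^sup>2 + (norm (r k))\<^sup>2"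
    by linarith
  then have "(1 + \<eta>) * norm (r i) * (norm (r k) + 2 * norm (r i))
      \<le> (1 + \<eta>) * (3 * (norm (r i))\<^sup>2 + (norm (r k))\<^sup>2)"
    using \<eta>_range by (simp add: mult.assoc mult_left_mono)
  then have "\<bar>inner (r i) (L (x i) (x k - x_ref))\<bar> \<le> (1 + \<eta>) * (3 * (norm (r i))\<^sup>2 + (norm (r k))\<^sup>2)"
    using residual_inner_bound[OF x_ref(4), of i k] by linarith
  then show ?thesis
    using \<alpha>_le_max[of i] \<alpha>_nonneg[of i] \<eta>_range
    by (simp add: mult.assoc mult_mono)
qed

definition "C = 1 + (3 * \<rho> + 4 * \<alpha>_max * (1 + \<eta>)) / (1 - \<beta>)"

lemma C_pos: "C > 0"
proof -
  have "0 \<le> (3 * \<rho> + 4 * \<alpha>_max * (1 + \<eta>)) / (1 - \<beta>)"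
    using \<rho>_pos \<alpha>_max_nonneg \<eta>_range \<beta>_range by (intro divide_nonneg_pos) auto
  then show ?thesis
    by (simp add: C_def)
qed

lemma D_iterates_bound:
  assumes "n \<le> k"
  shows "(1 - \<beta>) * (D (\<xi> n) (x k) (x n) - (D (\<xi> n) x_ref (x n) - D (\<xi> k) x_ref (x k)))
     \<le> 3 * \<rho> * norm (m n)
       + \<alpha>_max * (1 + \<eta>) * (3 * (\<Sum>i\<in>{n..<k}. (norm (r i))\<^sup>2) + real k * (norm (r k))\<^sup>2)"
proof -
  have "D (\<xi> n) (x k) (x n) - (D (\<xi> n) x_ref (x n) - D (\<xi> k) x_ref (x k))
      = inner (\<xi> (n + (k - n)) - \<xi> n) (x k - x_ref)"
    using assms by (simp add: D_three_point inner_diff_left inner_diff_right)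
  also have "\<dots> \<le> \<bar>\<dots>\<bar>"
    by simp
  finally have "(1 - \<beta>) * (D (\<xi> n) (x k) (x n) - (D (\<xi> n) x_ref (x n) - D (\<xi> k) x_ref (x k)))
      \<le> norm (m n) * norm (x k - x_ref) + (\<Sum>i\<in>{n..<k}. \<alpha> i * \<bar>inner (r i) (L (x i) (x k - x_ref))\<bar>)"
    using order_trans[OF mult_left_mono inner_\<xi>_diff_bound] \<beta>_range assms by fastforce
  moreover have "norm (m n) * norm (x k - x_ref) \<le> 3 * \<rho> * norm (m n)"
  proof -
    have "dist (x k) x_ref \<le> dist (x k) x0 + dist x0 x_ref"
      by (rule dist_triangle)
    then have "norm (x k - x_ref) \<le> 3 * \<rho>"
      using x_in_B[of k] x_ref(3) by (simp add: dist_commute dist_norm[symmetric])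
    then show ?thesis
      by (simp add: mult_left_mono mult.commute)
  qed
  moreover have "(\<Sum>i\<in>{n..<k}. \<alpha> i * \<bar>inner (r i) (L (x i) (x k - x_ref))\<bar>)
      \<le> \<alpha>_max * (1 + \<eta>) * (3 * (\<Sum>i\<in>{n..<k}. (norm (r i))\<^sup>2) + real k * (norm (r k))\<^sup>2)"
  proof -
    have "(\<Sum>i\<in>{n..<k}. \<alpha> i * \<bar>inner (r i) (L (x i) (x k - x_ref))\<bar>)
        \<le> (\<Sum>i\<in>{n..<k}. \<alpha>_max * (1 + \<eta>) * (3 * (norm (r i))\<^sup>2 + (norm (r k))\<^sup>2))"
      by (rule sum_mono) (rule \<alpha>_residual_inner_le)
    also have "\<dots> = \<alpha>_max * (1 + \<eta>) * (3 * (\<Sum>i\<in>{n..<k}. (norm (r i))\<^sup>2) + real (k - n) * (norm (r k))\<^sup>2)"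
      by (simp add: sum_distrib_left sum.distrib algebra_simps)
    also have "\<dots> \<le> \<alpha>_max * (1 + \<eta>) * (3 * (\<Sum>i\<in>{n..<k}. (norm (r i))\<^sup>2) + real k * (norm (r k))\<^sup>2)"
      using \<alpha>_max_nonneg \<eta>_range by (intro mult_left_mono add_left_mono mult_right_mono) auto
    finally show ?thesis .
  qed
  ultimately show ?thesis
    by linarith
qed

lemma D_iterates_le:
  assumes "n \<le> k" and decrease: "D (\<xi> n) x_ref (x n) - D (\<xi> k) x_ref (x k) \<le> \<delta>"
    and "norm (m n) \<le> \<delta>" and "(\<Sum>i\<in>{n..<k}. (norm (r i))\<^sup>2) \<le> \<delta>"
    and "real k * (norm (r k))\<^sup>2 \<le> \<delta>"
  shows "D (\<xi> n) (x k) (x n) \<le> C * \<delta>"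
proof -
  define K where "K = 3 * \<rho> + 4 * \<alpha>_max * (1 + \<eta>)"
  have "3 * \<rho> * norm (m n) \<le> 3 * \<rho> * \<delta>"
    using assms(3) \<rho>_pos by simp
  moreover have "\<alpha>_max * (1 + \<eta>) * (3 * (\<Sum>i\<in>{n..<k}. (norm (r i))\<^sup>2) + real k * (norm (r k))\<^sup>2)
      \<le> \<alpha>_max * (1 + \<eta>) * (4 * \<delta>)"
    using assms(4,5) \<alpha>_max_nonneg \<eta>_range by (intro mult_left_mono) auto
  ultimately have "(1 - \<beta>) * (D (\<xi> n) (x k) (x n) - (D (\<xi> n) x_ref (x n) - D (\<xi> k) x_ref (x k)))
      \<le> K * \<delta>"
    using D_iterates_bound[OF \<open>n \<le> k\<close>] by (simp add: K_def algebra_simps)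
  then have "D (\<xi> n) (x k) (x n) - (D (\<xi> n) x_ref (x n) - D (\<xi> k) x_ref (x k)) \<le> K * \<delta> / (1 - \<beta>)"
    using \<beta>_range by (simp add: le_divide_eq mult.commute)
  moreover have "C * \<delta> = \<delta> + K * \<delta> / (1 - \<beta>)"
    by (simp add: C_def K_def algebra_simps)
  ultimately show ?thesis
    using decrease by linarith
qed

lemma D_iterates_small:
  assumes "\<delta> > 0"
  shows "\<exists>N. \<forall>n\<ge>N. \<forall>k\<ge>n. real k * (norm (r k))\<^sup>2 \<le> \<delta> \<longrightarrow> D (\<xi> n) (x k) (x n) \<le> C * \<delta>"
proof -
  obtain l where l_lim: "(\<lambda>n. D (\<xi> n) x_ref (x n)) \<longlonglongrightarrow> l" and l_le: "\<forall>i. l \<le> D (\<xi> i) x_ref (x i)"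
    using decseq_convergent[OF D_solution_decseq[OF x_ref(4)], of 0] D_x_ref_nonneg by blast
  obtain N1 where N1: "\<forall>n\<ge>N1. D (\<xi> n) x_ref (x n) < l + \<delta>"
    using order_tendstoD(2)[OF l_lim, of "l + \<delta>"] \<open>\<delta> > 0\<close> by (auto simp: eventually_sequentially)
  obtain N2 where N2: "\<forall>n\<ge>N2. norm (m n) < \<delta>"
    using order_tendstoD(2)[OF m_tendsto_0 \<open>\<delta> > 0\<close>] by (auto simp: eventually_sequentially)
  obtain N3 where N3: "\<forall>n\<ge>N3. \<forall>k. norm (\<Sum>i\<in>{n..<k}. (norm (r i))\<^sup>2) < \<delta>"
    using summable_r \<open>\<delta> > 0\<close> unfolding summable_Cauchy by blast
  have "D (\<xi> n) (x k) (x n) \<le> C * \<delta>"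
    if "n \<ge> max N1 (max N2 N3)" "n \<le> k" "real k * (norm (r k))\<^sup>2 \<le> \<delta>" for n k
  proof (rule D_iterates_le[OF \<open>n \<le> k\<close> _ _ _ that(3)])
    have "D (\<xi> n) x_ref (x n) < l + \<delta>"
      using N1 that(1) by simp
    then show "D (\<xi> n) x_ref (x n) - D (\<xi> k) x_ref (x k) \<le> \<delta>"
      using l_le[rule_format, of k] by linarith
    show "norm (m n) \<le> \<delta>" "(\<Sum>i\<in>{n..<k}. (norm (r i))\<^sup>2) \<le> \<delta>"
      using N2 N3[rule_format, of n k] that(1) by (simp_all add: sum_nonneg less_imp_le)
  qed
  then show ?thesis
    by blast
qed

lemma x_Cauchy: "Cauchy x"
proof (rule metric_CauchyI)
  fix e :: real
  assume "0 < e"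
  define \<delta> where "\<delta> = \<sigma> * e\<^sup>2 / (8 * C)"
  have "\<delta> > 0"
    using \<sigma>_pos \<open>0 < e\<close> C_pos by (simp add: \<delta>_def)
  then obtain N where N: "\<And>n k. n \<ge> N \<Longrightarrow> k \<ge> n \<Longrightarrow> real k * (norm (r k))\<^sup>2 \<le> \<delta> \<Longrightarrow>
      D (\<xi> n) (x k) (x n) \<le> C * \<delta>"
    using D_iterates_small by blast
  \<comment> \<open>Residuals are not eventually small in the weighted sense \<open>k \<parallel>r\<^sub>k\<parallel>\<^sup>2\<close>, but frequently so;
    every iterate beyond \<open>N\<close> is close to all such later iterates.\<close>
  have close: "dist (x k) (x n) < e / 2"
    if "n \<ge> N" "k \<ge> n" "real k * (norm (r k))\<^sup>2 \<le> \<delta>" for n k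
  proof -
    have "\<sigma> * (norm (x k - x n))\<^sup>2 \<le> \<sigma> * (e\<^sup>2 / 8)"
      using D_lower[OF R_x_finite, of k n] N[OF that] C_pos by (simp add: \<delta>_def)
    then have "(norm (x k - x n))\<^sup>2 \<le> e\<^sup>2 / 8"
      using \<sigma>_pos by simp
    also have "\<dots> < (e / 2)\<^sup>2"
      using \<open>0 < e\<close> by (simp add: power_divide)
    finally have "(norm (x k - x n))\<^sup>2 < (e / 2)\<^sup>2" .
    then show ?thesis
      unfolding dist_norm by (rule power_less_imp_less_base) (use \<open>0 < e\<close> in simp)
  qed
  show "\<exists>M. \<forall>p\<ge>M. \<forall>q\<ge>M. dist (x p) (x q) < e"
  proof (intro exI allI impI)
    fix p q
    assume "p \<ge> N" "q \<ge> N"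
    obtain k where "k \<ge> max p q" "real k * (norm (r k))\<^sup>2 \<le> \<delta>"
      using summable_imp_frequently_index_mult_le[OF summable_r \<open>\<delta> > 0\<close>] by blast
    then have "dist (x k) (x p) < e / 2" "dist (x k) (x q) < e / 2"
      using close \<open>p \<ge> N\<close> \<open>q \<ge> N\<close> by auto
    then show "dist (x p) (x q) < e"
      using dist_triangle3[of "x p" "x q" "x k"] by linarith
  qed
qed

definition "x_star = lim x"

lemma x_tendsto: "x \<longlonglongrightarrow> x_star"
  using x_Cauchy by (simp add: x_star_def Cauchy_convergent_iff convergent_LIMSEQ_iff)

lemma x_star_in_B: "x_star \<in> B"
  by (rule closed_sequentially[OF closed_cball x_in_B x_tendsto])

lemma x_star_solution: "x_star \<in> domF" "F x_star = y"
proof -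
  have "(\<lambda>n. r n + y) \<longlonglongrightarrow> 0 + y"
    by (intro tendsto_add r_tendsto_0 tendsto_const)
  then have "(\<lambda>n. F (x n)) \<longlonglongrightarrow> y"
    by (simp add: r_def)
  moreover have "weak_conv x x_star"
    unfolding weak_conv_def by (intro allI tendsto_inner x_tendsto tendsto_const)
  ultimately show "x_star \<in> domF" "F x_star = y"
    using F_wclosed[of x] x_in_B ball_domF by blast+
qed

lemma R_x_star_le:
  assumes "\<delta> > 0"
  shows "\<exists>N. \<forall>n\<ge>N. R x_star \<le> ereal (Rr (x n) + inner (\<xi> n) (x_star - x n) + C * \<delta>)"
proof -
  obtain N where N: "\<And>n k. n \<ge> N \<Longrightarrow> k \<ge> n \<Longrightarrow> real k * (norm (r k))\<^sup>2 \<le> \<delta> \<Longrightarrow>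
      D (\<xi> n) (x k) (x n) \<le> C * \<delta>"
    using D_iterates_small[OF assms] by blast
  have "R x_star \<le> ereal (Rr (x n) + inner (\<xi> n) (x_star - x n) + C * \<delta>)" if "n \<ge> N" for n
  proof -
    have "\<forall>j. \<exists>k. k \<ge> n + j \<and> real k * (norm (r k))\<^sup>2 \<le> \<delta>"
      using summable_imp_frequently_index_mult_le[OF summable_r assms] by blast
    then obtain \<psi> where \<psi>: "\<And>j. \<psi> j \<ge> n + j" "\<And>j. real (\<psi> j) * (norm (r (\<psi> j)))\<^sup>2 \<le> \<delta>"
      by metis
    then have "filterlim \<psi> at_top sequentially"
      by (intro filterlim_at_top_mono[OF filterlim_ident always_eventually]) (meson le_add2 order_trans)
    then have "(\<lambda>j. x (\<psi> j)) \<longlonglongrightarrow> x_star"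
      by (rule filterlim_compose[OF x_tendsto])
    then show ?thesis
    proof (rule lsc_fun_le_lim[OF R_lsc])
      show "R (x (\<psi> j)) \<le> ereal (Rr (x n) + inner (\<xi> n) (x (\<psi> j) - x n) + C * \<delta>)" for j
      proof -
        have "D (\<xi> n) (x (\<psi> j)) (x n) \<le> C * \<delta>"
          using N[OF that order_trans[OF le_add1 \<psi>(1)] \<psi>(2)] .
        then show ?thesis
          using R_finite[OF R_x_finite] by (simp add: D_def)
      qed
      show "(\<lambda>j. Rr (x n) + inner (\<xi> n) (x (\<psi> j) - x n) + C * \<delta>)
          \<longlonglongrightarrow> Rr (x n) + inner (\<xi> n) (x_star - x n) + C * \<delta>"
        by (intro tendsto_intros \<open>(\<lambda>j. x (\<psi> j)) \<longlonglongrightarrow> x_star\<close>)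
    qed
  qed
  then show ?thesis
    by blast
qed

lemma R_x_star_finite: "R x_star \<noteq> \<infinity>"
  using R_x_star_le[of 1] by force

lemma D_x_star_tendsto_0: "(\<lambda>n. D (\<xi> n) x_star (x n)) \<longlonglongrightarrow> 0"
proof (rule LIMSEQ_I)
  fix e :: real
  assume "0 < e"
  then obtain N where N: "\<And>n. n \<ge> N \<Longrightarrow> R x_star \<le> ereal (Rr (x n) + inner (\<xi> n) (x_star - x n) + C * (e / (2 * C)))"
    using R_x_star_le[of "e / (2 * C)"] C_pos by auto
  have "norm (D (\<xi> n) x_star (x n) - 0) < e" if "n \<ge> N" for n
  proof -
    have "D (\<xi> n) x_star (x n) \<le> e / 2"
      using N[OF that] R_finite[OF R_x_star_finite] C_pos by (simp add: D_def)
    moreover have "0 \<le> \<sigma> * (norm (x_star - x n))\<^sup>2"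
      using \<sigma>_pos by simp
    ultimately show ?thesis
      using D_lower[OF R_x_star_finite, of n] \<open>0 < e\<close> by simp
  qed
  then show "\<exists>N. \<forall>n\<ge>N. norm (D (\<xi> n) x_star (x n) - 0) < e"
    by blast
qed

lemma bregman_x_star_tendsto_0: "(\<lambda>n. bregman R (\<xi> n) x_star (x n)) \<longlonglongrightarrow> 0"
proof -
  have "(\<lambda>n. ereal (D (\<xi> n) x_star (x n))) \<longlonglongrightarrow> ereal 0"
    using D_x_star_tendsto_0 by (rule tendsto_ereal)
  then show ?thesis
    by (simp add: bregman_eq_D[OF R_x_star_finite R_x_finite] zero_ereal_def)
qed

lemma inner_\<xi>_kernel:
  assumes ker: "\<forall>u\<in>B. {h. L xd h = 0} \<subseteq> {h. L u h = 0}" and "L xd h = 0"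
  shows "inner (\<xi> n - \<xi>0) h = 0"
proof -
  have "inner (m n) h = 0 \<and> inner (\<xi> n - \<xi>0) h = 0"
  proof (induction n)
    case 0
    then show ?case
      by (simp add: m_0 \<xi>_init)
  next
    case (Suc n)
    have "L (x n) h = 0"
      using ker x_in_B[of n] \<open>L xd h = 0\<close> by blast
    then have "inner (m (Suc n)) h = 0"
      using Suc.IH by (simp add: m_Suc inner_diff_left inner_g)
    moreover have "\<xi> (Suc n) - \<xi>0 = (\<xi> n - \<xi>0) + m (Suc n)"
      by (simp add: m_Suc_eq)
    ultimately show ?case
      using Suc.IH by (simp add: inner_add_left inner_diff_left)
  qed
  then show ?thesis ..
qed

lemma minimal_solution_near_x0:
  assumes minimal: "\<forall>z\<in>domF. F z = y \<longrightarrow> bregman R \<xi>0 xd x0 \<le> bregman R \<xi>0 z x0"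
  shows "R xd \<noteq> \<infinity>" and "xd \<in> B"
proof -
  have R_x0: "R x0 \<noteq> \<infinity>"
    using R_x_finite[of 0] by (simp add: x_init)
  have "x_ref \<in> domF" "F x_ref = y"
    using x_ref(4) ball_domF by (auto simp: solution_def)
  then have "bregman R \<xi>0 xd x0 \<le> bregman R \<xi>0 x_ref x0"
    using minimal by blast
  also have "\<dots> = ereal (D \<xi>0 x_ref x0)"
    by (rule bregman_eq_D[OF x_ref(1) R_x0])
  also have "\<dots> \<le> ereal (\<sigma> * \<rho>\<^sup>2)"
    using x_ref(2) by simp
  finally have "R xd \<noteq> \<infinity>" and "dist x0 xd \<le> \<rho>"
    by (rule bregman_le_imp_near_x0)+
  then show "R xd \<noteq> \<infinity>" and "xd \<in> B"
    using \<rho>_pos by simp_all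
qed

lemma minimal_solution_D_le:
  assumes "F xd = y"
    and minimal: "\<forall>z\<in>domF. F z = y \<longrightarrow> bregman R \<xi>0 xd x0 \<le> bregman R \<xi>0 z x0"
    and ker: "\<forall>u\<in>B. {h. L xd h = 0} \<subseteq> {h. L u h = 0}"
  shows "\<sigma> * (norm (xd - x n))\<^sup>2 \<le> D (\<xi> n) x_star (x n)"
proof -
  have R_x0: "R x0 \<noteq> \<infinity>"
    using R_x_finite[of 0] by (simp add: x_init)
  note R_xd = minimal_solution_near_x0(1)[OF minimal]
  have "L xd (x_star - xd) = 0"
    using tcc[OF x_star_in_B minimal_solution_near_x0(2)[OF minimal]] x_star_solution(2) \<open>F xd = y\<close>
    by simp
  then have orth: "inner (\<xi> n - \<xi>0) (x_star - xd) = 0"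
    using inner_\<xi>_kernel[OF ker] by blast
  have "bregman R \<xi>0 xd x0 \<le> bregman R \<xi>0 x_star x0"
    using minimal x_star_solution by blast
  then have "D \<xi>0 xd x0 \<le> D \<xi>0 x_star x0"
    by (simp add: bregman_eq_D[OF R_xd R_x0] bregman_eq_D[OF R_x_star_finite R_x0])
  \<comment> \<open>Since \<open>\<xi>\<^sub>n - \<xi>\<^sub>0 \<bottom> x_star - xd\<close>, minimality of \<open>xd\<close> transfers from base point \<open>x\<^sub>0\<close> to \<open>x\<^sub>n\<close>.\<close>
  moreover have "D (\<xi> n) xd (x n) - D (\<xi> n) x_star (x n)
      = (D \<xi>0 xd x0 - D \<xi>0 x_star x0) + inner (\<xi> n - \<xi>0) (x_star - xd)"
    by (simp add: D_def inner_diff_left inner_diff_right algebra_simps)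
  ultimately show ?thesis
    using D_lower[OF R_xd, of n] orth by linarith
qed

lemma x_star_eq_minimal_solution:
  assumes "F xd = y"
    and minimal: "\<forall>z\<in>domF. F z = y \<longrightarrow> bregman R \<xi>0 xd x0 \<le> bregman R \<xi>0 z x0"
    and ker: "\<forall>u\<in>B. {h. L xd h = 0} \<subseteq> {h. L u h = 0}"
  shows "x_star = xd"
proof -
  have "(norm (x n - xd))\<^sup>2 \<le> D (\<xi> n) x_star (x n) / \<sigma>" for n
    using minimal_solution_D_le[OF assms, of n] unfolding norm_minus_commute[of "x n" xd]
    by (metis \<sigma>_pos mult.commute pos_le_divide_eq)
  then have "eventually (\<lambda>n. norm (x n - xd) \<le> sqrt (D (\<xi> n) x_star (x n) / \<sigma>)) sequentially"
    by (intro always_eventually allI real_le_rsqrt)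
  moreover have "(\<lambda>n. sqrt (D (\<xi> n) x_star (x n) / \<sigma>)) \<longlonglongrightarrow> sqrt (0 / \<sigma>)"
    by (intro tendsto_real_sqrt tendsto_divide tendsto_const D_x_star_tendsto_0) (use \<sigma>_pos in simp)
  then have "(\<lambda>n. sqrt (D (\<xi> n) x_star (x n) / \<sigma>)) \<longlonglongrightarrow> 0"
    by simp
  ultimately have "(\<lambda>n. x n - xd) \<longlonglongrightarrow> 0"
    by (rule Lim_null_comparison)
  then have "x \<longlonglongrightarrow> xd"
    by (simp only: LIM_zero_iff)
  with x_tendsto show ?thesis
    by (rule LIMSEQ_unique)
qed

lemma convergence_to_solution:
  "\<exists>xs. xs \<in> domF \<and> F xs = y \<and> xs \<in> cball x0 (2 * \<rho>) \<inter> effdom R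
      \<and> (\<lambda>n. bregman R (\<xi> n) xs (x n)) \<longlonglongrightarrow> 0
      \<and> (\<lambda>n. norm (x n - xs)) \<longlonglongrightarrow> 0
      \<and> (\<forall>xd. (xd \<in> domF \<and> F xd = y
                \<and> (\<forall>z\<in>domF. F z = y \<longrightarrow> bregman R \<xi>0 xd x0 \<le> bregman R \<xi>0 z x0)
                \<and> (\<forall>u\<in>cball x0 (2 * \<rho>). {h. L xd h = 0} \<subseteq> {h. L u h = 0}))
             \<longrightarrow> xs = xd)"
proof (intro exI conjI allI impI)
  show "x_star \<in> domF" "F x_star = y"
    by (fact x_star_solution)+
  show "x_star \<in> B \<inter> effdom R"
    using x_star_in_B R_x_star_finite by (simp add: effdom_def less_top)
  show "(\<lambda>n. bregman R (\<xi> n) x_star (x n)) \<longlonglongrightarrow> 0"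
    by (fact bregman_x_star_tendsto_0)
  show "(\<lambda>n. norm (x n - x_star)) \<longlonglongrightarrow> 0"
    using tendsto_norm_zero[OF LIM_zero[OF x_tendsto]] .
qed (use x_star_eq_minimal_solution in blast)

end

theorem mainTheorem7:
  fixes R :: "'a::{real_inner,complete_space} \<Rightarrow> ereal"
    and F :: "'a \<Rightarrow> 'b::{real_inner,complete_space}"
    and domF :: "'a set"
    and y :: 'b
    and L :: "'a \<Rightarrow> ('a \<Rightarrow>\<^sub>L 'b)"
    and \<sigma> \<rho> \<eta> Lc \<mu>0 \<mu>1 \<beta> :: real
    and x0 \<xi>0 :: 'a
    and adaptive :: bool
    and \<xi> x m g :: "nat \<Rightarrow> 'a"
    and r :: "nat \<Rightarrow> 'b"
    and \<alpha> bt gt :: "nat \<Rightarrow> real"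
  assumes R_proper: "proper_fun R"
    and R_lsc: "lsc_fun R"
    and \<sigma>_pos: "\<sigma> > 0"
    and R_sconv: "strongly_convex R \<sigma>"
    and \<rho>_pos: "\<rho> > 0"
    and \<xi>0_sub: "\<xi>0 \<in> subdiff R x0"
    and ball_domF: "cball x0 (2 * \<rho>) \<subseteq> domF"
    and sol_exists: "\<exists>xb\<in>domF. F xb = y \<and> bregman R \<xi>0 xb x0 \<le> ereal (\<sigma> * \<rho>\<^sup>2)"
    and F_wclosed: "\<And>s u v. (\<forall>n. s n \<in> domF) \<Longrightarrow> weak_conv s u \<Longrightarrow>
                       (\<lambda>n. F (s n)) \<longlonglongrightarrow> v \<Longrightarrow> u \<in> domF \<and> F u = v"
    and L_cont: "continuous_on (cball x0 (2 * \<rho>)) L"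
    and \<eta>_range: "0 \<le> \<eta>" "\<eta> < 1"
    and tcc: "\<And>u ub. u \<in> cball x0 (2 * \<rho>) \<Longrightarrow> ub \<in> cball x0 (2 * \<rho>) \<Longrightarrow>
               norm (F u - F ub - blinfun_apply (L ub) (u - ub)) \<le> \<eta> * norm (F u - F ub)"
    and Lc_pos: "Lc > 0"
    and L_bound: "\<And>u. u \<in> cball x0 (2 * \<rho>) \<Longrightarrow> norm (L u) \<le> Lc"
    and \<mu>0_range: "0 < \<mu>0" "\<mu>0 < 4 * \<sigma> * (1 - \<eta>)"
    and \<mu>1_pos: "\<mu>1 > 0"
    and \<beta>_range: "0 < \<beta>" "\<beta> < 1"
    and x_init: "x 0 = x0"
    and \<xi>_init: "\<xi> 0 = \<xi>0"
    and x_grad: "\<And>n. is_grad_conj R (\<xi> n) (x n)"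
    and r_def: "\<And>n. r n = F (x n) - y"
    and g_def: "\<And>n. g n = adjoint (blinfun_apply (L (x n))) (r n)"
    and \<alpha>_def: "\<And>n. \<alpha> n =
          (if adaptive then
             (if r n = 0 then 0
              else if g n = 0 then \<mu>1
              else min (\<mu>0 * (norm (r n))\<^sup>2 / (norm (g n))\<^sup>2) \<mu>1)
           else \<mu>0 / Lc\<^sup>2)"
    and m_def: "\<And>n. m n = (if n = 0 then \<xi> 0 - \<xi>0 else \<xi> n - \<xi> (n - 1))"
    and gt_0: "gt 0 = 0"
    and gt_Suc: "\<And>n. gt (Suc n) = inner (m (Suc n)) (x (Suc n) - x n)
                   - (1 - \<eta>) * \<alpha> n * (norm (r n))\<^sup>2 + bt n * gt n"
    and bt_def: "\<And>n. bt n = (if m n = 0 then 0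
                   else min (max 0 ((\<alpha> n * inner (g n) (m n) - 2 * \<sigma> * gt n) / (norm (m n))\<^sup>2)) \<beta>)"
    and \<xi>_Suc: "\<And>n. \<xi> (Suc n) = \<xi> n - \<alpha> n *\<^sub>R g n + bt n *\<^sub>R m n"
  shows "\<exists>xs. xs \<in> domF \<and> F xs = y \<and> xs \<in> cball x0 (2 * \<rho>) \<inter> effdom R
           \<and> (\<lambda>n. bregman R (\<xi> n) xs (x n)) \<longlonglongrightarrow> 0
           \<and> (\<lambda>n. norm (x n - xs)) \<longlonglongrightarrow> 0
           \<and> (\<forall>xd. (xd \<in> domF \<and> F xd = y
                     \<and> (\<forall>z\<in>domF. F z = y \<longrightarrow> bregman R \<xi>0 xd x0 \<le> bregman R \<xi>0 z x0)
                     \<and> (\<forall>u\<in>cball x0 (2 * \<rho>). {h. L xd h = 0} \<subseteq> {h. L u h = 0}))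
                  \<longrightarrow> xs = xd)"
proof -
  interpret heavy_ball_landweber R F domF y L \<sigma> \<rho> \<eta> Lc \<mu>0 \<mu>1 \<beta> x0 \<xi>0 adaptive \<xi> x m g r \<alpha> bt gt
    by (rule heavy_ball_landweber.intro) (fact assms)+
  show ?thesis
    by (rule convergence_to_solution)
qed

end
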